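(* Let $n\ge 2$ and let $\zeta_1,\dots,\zeta_{n-1}$ be the positive roots of $U'_{2n-1}$. For each $i$, the value $(SU_{2n-1})(\zeta_i)$, viewed as a polynomial in $x$, vanishes exactly at \[ x=\zeta_i^2-\frac{2}{(2n+1)(2n-1)}. \] Consequently the roots of the Jeff polynomial $J(x)$ are exactly the $n-1$ real numbers $\zeta_i^2-\frac{2}{(2n-1)(2n+1)}$, $i=1,\dots,n-1$.
   Context: $T_m,U_m$ are Chebyshev polynomials: $T_m(\cos\theta)=\cos m\theta$, $U_m(\cos\theta)=\sin((m+1)\theta)/\sin\theta$. For an indeterminate $x$, \[ (SU_{2n-1})(z)=\frac12\int_{-z}^{z}U'_{2n-1}(t)(x-t^2)\,dt=(x-z^2)U_{2n-1}(z)+\frac{T_{2n+1}(z)}{2n+1}+\frac{T_{2n-1}(z)}{2n-1}. \] The Jeff polynomial $J(x)\in\mathbb{Z}[x]$ is the (up to sign unique) integer polynomial with coprime coefficients that is a nonzero real scalar multiple of $\prod_{i=1}^{n-1}(SU_{2n-1})(\zeta_i)$. *)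

theory Defs
  imports "HOL-Computational_Algebra.Polynomial_Factorial"
begin

text \<open>Chebyshev polynomials of the first and second kind, as real polynomials,
  via the standard three-term recurrence (equivalent to
  T_m(cos t) = cos (m t), U_m(cos t) = sin((m+1)t)/sin t).\<close>

fun cheb_T :: "nat \<Rightarrow> real poly" where
  "cheb_T 0 = 1"
| "cheb_T (Suc 0) = [:0, 1:]"
| "cheb_T (Suc (Suc m)) = [:0, 2:] * cheb_T (Suc m) - cheb_T m"

fun cheb_U :: "nat \<Rightarrow> real poly" where
  "cheb_U 0 = 1"
| "cheb_U (Suc 0) = [:0, 2:]"
| "cheb_U (Suc (Suc m)) = [:0, 2:] * cheb_U (Suc m) - cheb_U m"

definition SU :: "nat \<Rightarrow> real \<Rightarrow> real poly" where
  "SU n z = smult (poly (cheb_U (2*n - 1)) z) [:- (z^2), 1:]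
            + [: poly (cheb_T (2*n + 1)) z / real (2*n + 1)
                 + poly (cheb_T (2*n - 1)) z / real (2*n - 1) :]"

definition zetas :: "nat \<Rightarrow> real set" where
  "zetas n = {z. z > 0 \<and> poly (pderiv (cheb_U (2*n - 1))) z = 0}"

definition is_jeff :: "nat \<Rightarrow> int poly \<Rightarrow> bool" where
  "is_jeff n J \<longleftrightarrow> content J = 1 \<and>
     (\<exists>c::real. c \<noteq> 0 \<and> map_poly of_int J = smult c (\<Prod>z\<in>zetas n. SU n z))"

end

theory Submission imports Defs begin

text \<open>The roots of U_m are the nodes cos (j pi / (m+1)), j = 1..m. By Rolle's theorem and a
  degree count, the m - 1 roots of U_m' lie strictly between consecutive nodes; hence none of
  them is a root of U_m, and for m = 2n - 1 exactly n - 1 of them are positive, since the middle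
  node is 0. The identity k T_(k+2) + (k+2) T_k = 2 U_k + 2z (z^2 - 1) U_k' shows that at such a
  critical point z the constant term of SU_(2n-1)(z) is 2 U(z) / ((2n-1)(2n+1)), so SU_(2n-1)(z)
  is the linear polynomial U(z) (x - z^2 + 2/((2n-1)(2n+1))) with U(z) \<noteq> 0.\<close>

lemma poly_roots_eq_image:
  fixes p :: "'a::idom poly"
  assumes "p \<noteq> 0" "finite I" "degree p \<le> card I" "inj_on f I" "\<And>i. i \<in> I \<Longrightarrow> poly p (f i) = 0"
  shows "{x. poly p x = 0} = f ` I"
proof (rule card_seteq [symmetric])
  show "finite {x. poly p x = 0}" using assms(1) by (rule poly_roots_finite)
  show "f ` I \<subseteq> {x. poly p x = 0}" using assms(5) by blast
  have "card {x. poly p x = 0} \<le> degree p" using assms(1) by (rule card_poly_roots_bound)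
  then show "card {x. poly p x = 0} \<le> card (f ` I)"
    using assms(3,4) by (simp add: card_image)
qed

lemma pderiv_root_between:
  fixes p :: "real poly"
  assumes "a < b" "poly p a = 0" "poly p b = 0"
  shows "\<exists>y. a < y \<and> y < b \<and> poly (pderiv p) y = 0"
  using poly_MVT [OF assms(1), of p] assms by auto

lemma map_poly_of_real_mult:
  "map_poly of_real (p * q) = (map_poly of_real p * map_poly of_real q :: 'a::{real_algebra_1,comm_ring_1} poly)"
  by (rule poly_eqI) (simp add: coeff_map_poly coeff_mult)

lemma map_poly_of_real_prod:
  "map_poly of_real (\<Prod>i\<in>A. f i) = (\<Prod>i\<in>A. map_poly of_real (f i) :: 'a::{real_algebra_1,comm_ring_1} poly)"
  by (induction A rule: infinite_finite_induct) (simp_all add: map_poly_of_real_mult)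

lemma complex_roots_of_product_of_linear_factors:
  assumes "finite A" "c \<noteq> 0" "\<And>z. z \<in> A \<Longrightarrow> u z \<noteq> 0"
  shows "{w::complex. poly (map_poly of_real (smult c (\<Prod>z\<in>A. smult (u z) [:- r z, 1:]))) w = 0}
           = of_real ` r ` A"
proof -
  have "poly (map_poly of_real (smult c (\<Prod>z\<in>A. smult (u z) [:- r z, 1:]))) w
          = of_real c * (\<Prod>z\<in>A. of_real (u z) * (w - of_real (r z)))" for w :: complex
    by (simp only: map_poly_smult [where f = of_real, OF of_real_0 of_real_mult] map_poly_of_real_prod)
      (simp add: poly_prod map_poly_pCons algebra_simps)
  then show ?thesis using assms by auto
qed

lemma poly_cheb_U_Suc_Suc:
  "poly (cheb_U (Suc (Suc m))) z = 2 * z * poly (cheb_U (Suc m)) z - poly (cheb_U m) z"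
  by simp

lemma poly_cheb_T_Suc_Suc:
  "poly (cheb_T (Suc (Suc m))) z = 2 * z * poly (cheb_T (Suc m)) z - poly (cheb_T m) z"
  by simp

lemma poly_pderiv_cheb_U_Suc_Suc:
  "poly (pderiv (cheb_U (Suc (Suc m)))) z
     = 2 * poly (cheb_U (Suc m)) z + 2 * z * poly (pderiv (cheb_U (Suc m))) z
       - poly (pderiv (cheb_U m)) z"
  by (simp add: pderiv_diff pderiv_mult pderiv_pCons pderiv_smult algebra_simps)

lemma cheb_U_cheb_T:
  "(z\<^sup>2 - 1) * poly (cheb_U k) z = z * poly (cheb_T (Suc k)) z - poly (cheb_T k) z"
proof (induction k rule: cheb_U.induct)
  case (3 m)
  have "(z\<^sup>2 - 1) * poly (cheb_U (Suc (Suc m))) z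
      = 2 * z * ((z\<^sup>2 - 1) * poly (cheb_U (Suc m)) z) - (z\<^sup>2 - 1) * poly (cheb_U m) z"
    by (simp only: poly_cheb_U_Suc_Suc) (simp add: algebra_simps)
  also have "\<dots> = z * poly (cheb_T (Suc (Suc (Suc m)))) z - poly (cheb_T (Suc (Suc m))) z"
    unfolding 3 by (simp only: poly_cheb_T_Suc_Suc) (simp add: algebra_simps)
  finally show ?case .
qed (simp_all add: power2_eq_square algebra_simps)

lemma pderiv_cheb_U_cheb_T:
  "(z\<^sup>2 - 1) * poly (pderiv (cheb_U k)) z
     = (real k + 1) * poly (cheb_T (Suc k)) z - z * poly (cheb_U k) z"
proof (induction k rule: cheb_U.induct)
  case (3 m)
  have "(z\<^sup>2 - 1) * poly (pderiv (cheb_U (Suc (Suc m)))) z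
      = 2 * ((z\<^sup>2 - 1) * poly (cheb_U (Suc m)) z)
        + 2 * z * ((z\<^sup>2 - 1) * poly (pderiv (cheb_U (Suc m))) z)
        - (z\<^sup>2 - 1) * poly (pderiv (cheb_U m)) z"
    by (simp only: poly_pderiv_cheb_U_Suc_Suc) (simp add: algebra_simps)
  also have "\<dots> = (real (Suc (Suc m)) + 1) * poly (cheb_T (Suc (Suc (Suc m)))) z
                   - z * poly (cheb_U (Suc (Suc m))) z"
    unfolding cheb_U_cheb_T 3
    by (simp only: poly_cheb_T_Suc_Suc poly_cheb_U_Suc_Suc) (simp add: algebra_simps power2_eq_square)
  finally show ?case .
qed (simp_all add: power2_eq_square algebra_simps pderiv_pCons)

lemma cheb_T_combination:
  "real k * poly (cheb_T (Suc (Suc k))) z + (real k + 2) * poly (cheb_T k) z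
     = 2 * poly (cheb_U k) z + 2 * z * ((z\<^sup>2 - 1) * poly (pderiv (cheb_U k)) z)"
proof -
  have "poly (cheb_T (Suc (Suc k))) z - poly (cheb_T k) z = 2 * ((z\<^sup>2 - 1) * poly (cheb_U k) z)"
    unfolding cheb_U_cheb_T by (simp only: poly_cheb_T_Suc_Suc) (simp add: algebra_simps)
  then show ?thesis
    unfolding pderiv_cheb_U_cheb_T
    by (simp only: poly_cheb_T_Suc_Suc) (simp add: algebra_simps power2_eq_square)
qed

lemma poly_cheb_U_cos:
  "poly (cheb_U k) (cos t) * sin t = sin ((real k + 1) * t)"
proof (induction k rule: cheb_U.induct)
  case (3 m)
  have sin_rec: "sin ((real m + 3) * t) = 2 * cos t * sin ((real m + 2) * t) - sin ((real m + 1) * t)"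
    using sin_add [of "(real m + 2) * t" t] sin_diff [of "(real m + 2) * t" t]
    by (simp add: algebra_simps)
  have "poly (cheb_U (Suc (Suc m))) (cos t) * sin t
      = 2 * cos t * (poly (cheb_U (Suc m)) (cos t) * sin t) - poly (cheb_U m) (cos t) * sin t"
    by (simp only: poly_cheb_U_Suc_Suc) (simp add: algebra_simps)
  also have "\<dots> = sin ((real (Suc (Suc m)) + 1) * t)"
    unfolding 3 using sin_rec by (simp add: algebra_simps)
  finally show ?case .
qed (use sin_double [of t] in \<open>simp_all add: algebra_simps\<close>)

lemma degree_cheb_U_le: "degree (cheb_U k) \<le> k"
proof (induction k rule: cheb_U.induct)
  case (3 m)
  have "degree ([:0, 2:] * cheb_U (Suc m)) \<le> Suc (Suc m)"
    using degree_mult_le [of "[:0, 2::real:]" "cheb_U (Suc m)"] 3 by auto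
  then show ?case using 3 by (simp add: degree_diff_le)
qed auto

lemma cheb_U_nonzero: "cheb_U k \<noteq> 0"
proof
  assume "cheb_U k = 0"
  define t where "t = pi / (2 * (real k + 1))"
  have "(real k + 1) * t = pi / 2"
    by (simp add: t_def field_simps)
  then have "sin (pi / 2) = poly (cheb_U k) (cos t) * sin t"
    by (simp only: poly_cheb_U_cos)
  with \<open>cheb_U k = 0\<close> show False by simp
qed

definition cheb_U_node :: "nat \<Rightarrow> nat \<Rightarrow> real" where
  "cheb_U_node m j = cos (real j * pi / real (Suc m))"

lemma cheb_U_node_strict_antimono:
  assumes "i < j" "j \<le> Suc m"
  shows "cheb_U_node m j < cheb_U_node m i"
proof -
  have "real i * pi / real (Suc m) < real j * pi / real (Suc m)"
    using assms by (simp add: divide_strict_right_mono)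
  moreover have "real j * pi / real (Suc m) \<le> pi"
    using assms by (simp add: divide_le_eq mult_right_mono)
  ultimately show ?thesis
    unfolding cheb_U_node_def by (intro cos_monotone_0_pi) auto
qed

lemma cheb_U_node_antimono: "i \<le> j \<Longrightarrow> j \<le> Suc m \<Longrightarrow> cheb_U_node m j \<le> cheb_U_node m i"
  using cheb_U_node_strict_antimono [of i j m] by (cases "i = j") auto

lemma inj_on_cheb_U_node: "inj_on (cheb_U_node m) {..Suc m}"
  by (rule inj_onI) (metis atMost_iff cheb_U_node_strict_antimono less_irrefl linorder_cases)

lemma poly_cheb_U_node:
  assumes "1 \<le> j" "j \<le> m"
  shows "poly (cheb_U m) (cheb_U_node m j) = 0"
proof -
  define t where "t = real j * pi / real (Suc m)"
  have "0 < t" "t < pi"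
    using assms by (simp_all add: t_def divide_less_eq)
  then have "sin t \<noteq> 0" using sin_gt_zero [of t] by simp
  have "(real m + 1) * t = real j * pi"
    by (simp add: t_def field_simps)
  then have "poly (cheb_U m) (cos t) * sin t = 0"
    by (simp add: poly_cheb_U_cos)
  with \<open>sin t \<noteq> 0\<close> show ?thesis
    unfolding cheb_U_node_def t_def [symmetric] by simp
qed

lemma roots_cheb_U: "{z. poly (cheb_U m) z = 0} = cheb_U_node m ` {1..m}"
  by (rule poly_roots_eq_image)
    (auto simp: cheb_U_nonzero degree_cheb_U_le poly_cheb_U_node
      intro: inj_on_subset [OF inj_on_cheb_U_node])

lemma pderiv_cheb_U_nonzero:
  assumes "m \<ge> 1"
  shows "pderiv (cheb_U m) \<noteq> 0"
proof
  assume "pderiv (cheb_U m) = 0"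
  then obtain c where c: "cheb_U m = [:c:]"
    by (metis degree_eq_zeroE pderiv_eq_0_iff)
  have "poly (cheb_U m) (cheb_U_node m 1) = 0"
    using assms by (simp add: poly_cheb_U_node)
  with c cheb_U_nonzero [of m] show False by simp
qed

lemma cheb_U_critical_points:
  assumes "m \<ge> 1"
  obtains y where
    "\<And>j. j \<in> {1..m-1} \<Longrightarrow> cheb_U_node m (Suc j) < y j \<and> y j < cheb_U_node m j"
    "inj_on y {1..m-1}"
    "{z. poly (pderiv (cheb_U m)) z = 0} = y ` {1..m-1}"
proof -
  have "\<forall>j\<in>{1..m-1}. \<exists>y. cheb_U_node m (Suc j) < y \<and> y < cheb_U_node m j
                            \<and> poly (pderiv (cheb_U m)) y = 0"
    by (auto intro!: pderiv_root_between cheb_U_node_strict_antimono poly_cheb_U_node)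
  then obtain y where y: "\<And>j. j \<in> {1..m-1} \<Longrightarrow> cheb_U_node m (Suc j) < y j \<and> y j < cheb_U_node m j
                                  \<and> poly (pderiv (cheb_U m)) (y j) = 0"
    by metis
  have y_decreasing: "y i < y j" if "j < i" "i \<in> {1..m-1}" "j \<in> {1..m-1}" for i j
  proof -
    have "y i < cheb_U_node m i" using y [OF that(2)] by simp
    also have "\<dots> \<le> cheb_U_node m (Suc j)" using that by (intro cheb_U_node_antimono) auto
    also have "\<dots> < y j" using y [OF that(3)] by simp
    finally show ?thesis .
  qed
  have inj: "inj_on y {1..m-1}"
    by (rule inj_onI) (metis y_decreasing less_irrefl linorder_cases)
  have "degree (pderiv (cheb_U m)) \<le> m - 1"
    using degree_cheb_U_le [of m] by (simp add: degree_pderiv)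
  then have "{z. poly (pderiv (cheb_U m)) z = 0} = y ` {1..m-1}"
    using inj y by (intro poly_roots_eq_image pderiv_cheb_U_nonzero assms) (simp_all add: card_image)
  with that y inj show ?thesis by blast
qed

lemma poly_cheb_U_nonzero_at_critical_point:
  assumes "poly (pderiv (cheb_U m)) z = 0"
  shows "poly (cheb_U m) z \<noteq> 0"
proof
  assume root: "poly (cheb_U m) z = 0"
  then have "m \<ge> 1"
    by (cases m) auto
  then obtain y where y: "\<And>j. j \<in> {1..m-1} \<Longrightarrow> cheb_U_node m (Suc j) < y j \<and> y j < cheb_U_node m j"
    and crit: "{z. poly (pderiv (cheb_U m)) z = 0} = y ` {1..m-1}"
    by (rule cheb_U_critical_points) blast
  obtain j where j: "j \<in> {1..m-1}" "z = y j" using assms crit by blast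
  obtain i where i: "i \<in> {1..m}" "z = cheb_U_node m i" using root roots_cheb_U by blast
  show False
  proof (cases "i \<le> j")
    case True
    then have "cheb_U_node m j \<le> cheb_U_node m i" using j by (intro cheb_U_node_antimono) auto
    then show False using y [OF j(1)] i j by simp
  next
    case False
    then have "cheb_U_node m i \<le> cheb_U_node m (Suc j)" using i by (intro cheb_U_node_antimono) auto
    then show False using y [OF j(1)] i j by simp
  qed
qed

lemma finite_zetas: "n \<ge> 1 \<Longrightarrow> finite (zetas n)"
  by (rule finite_subset [OF _ poly_roots_finite [OF pderiv_cheb_U_nonzero [of "2*n-1"]]])
    (auto simp: zetas_def)

lemma card_zetas:
  assumes "n \<ge> 1"
  shows "card (zetas n) = n - 1"
proof -
  have m: "2 * n - 1 \<ge> 1" "Suc (2 * n - 1) = 2 * n" "2 * n - 1 - 1 = 2 * n - 2"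
    using assms by auto
  obtain y where y: "\<And>j. j \<in> {1..2*n-2} \<Longrightarrow> cheb_U_node (2*n-1) (Suc j) < y j \<and> y j < cheb_U_node (2*n-1) j"
    and inj: "inj_on y {1..2*n-2}"
    and crit: "{z. poly (pderiv (cheb_U (2*n-1))) z = 0} = y ` {1..2*n-2}"
    using cheb_U_critical_points [OF m(1)] unfolding m(3) by blast
  have node_mid: "cheb_U_node (2*n-1) n = 0"
    using assms by (simp add: cheb_U_node_def m(2))
  have "zetas n = y ` {1..n-1}"
  proof (intro equalityI subsetI)
    fix z assume "z \<in> zetas n"
    then obtain j where j: "j \<in> {1..2*n-2}" "z = y j" "z > 0"
      using crit unfolding zetas_def by blast
    have "j \<le> n - 1"
    proof (rule ccontr)
      assume "\<not> j \<le> n - 1"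
      then have "cheb_U_node (2*n-1) j \<le> cheb_U_node (2*n-1) n"
        using j by (intro cheb_U_node_antimono) auto
      then show False using y [OF j(1)] j node_mid by simp
    qed
    with j show "z \<in> y ` {1..n-1}" by auto
  next
    fix z assume "z \<in> y ` {1..n-1}"
    then obtain j where "j \<in> {1..n-1}" "z = y j" by blast
    then have j: "j \<in> {1..2*n-2}" "j \<le> n - 1" "z = y j" by auto
    have "cheb_U_node (2*n-1) n \<le> cheb_U_node (2*n-1) (Suc j)"
      using j by (intro cheb_U_node_antimono) auto
    then show "z \<in> zetas n"
      using y [OF j(1)] j crit node_mid unfolding zetas_def by auto
  qed
  moreover have "inj_on y {1..n-1}"
    by (rule inj_on_subset [OF inj]) auto
  ultimately show ?thesis by (simp add: card_image)
qed

lemma SU_at_critical_point: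
  assumes "n \<ge> 1" "poly (pderiv (cheb_U (2*n-1))) z = 0"
  shows "SU n z = smult (poly (cheb_U (2*n-1)) z)
                   [:- (z\<^sup>2 - 2 / ((2 * real n - 1) * (2 * real n + 1))), 1:]"
proof -
  let ?u = "poly (cheb_U (2*n-1)) z"
  have k: "Suc (Suc (2*n-1)) = 2*n+1" "real (2*n-1) = 2 * real n - 1"
    using assms(1) by (simp_all add: of_nat_diff)
  have "(2 * real n - 1) * poly (cheb_T (2*n+1)) z + (2 * real n + 1) * poly (cheb_T (2*n-1)) z = 2 * ?u"
    using cheb_T_combination [of "2*n-1" z] assms(2) unfolding k by (simp add: algebra_simps)
  then have "poly (cheb_T (2*n+1)) z / real (2*n+1) + poly (cheb_T (2*n-1)) z / real (2*n-1)
               = ?u * (2 / ((2 * real n - 1) * (2 * real n + 1)))"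
    using assms(1) unfolding k by (simp add: field_simps)
  then show ?thesis
    unfolding SU_def by (simp add: algebra_simps)
qed

lemma roots_SU:
  assumes "n \<ge> 1" "z \<in> zetas n"
  shows "{x. poly (SU n z) x = 0} = {z\<^sup>2 - 2 / ((2 * real n - 1) * (2 * real n + 1))}"
proof -
  have crit: "poly (pderiv (cheb_U (2*n-1))) z = 0"
    using assms(2) by (simp add: zetas_def)
  let ?u = "poly (cheb_U (2*n-1)) z" and ?a = "z\<^sup>2 - 2 / ((2 * real n - 1) * (2 * real n + 1))"
  have "?u \<noteq> 0"
    using crit by (rule poly_cheb_U_nonzero_at_critical_point)
  moreover have "poly (SU n z) x = ?u * (x - ?a)" for x
    unfolding SU_at_critical_point [OF assms(1) crit] by (simp add: algebra_simps)
  ultimately show ?thesis by auto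
qed

theorem mainTheorem3:
  fixes n :: nat and J :: "int poly"
  assumes "n \<ge> 2"
  shows "(\<forall>z\<in>zetas n. {x::real. poly (SU n z) x = 0}
            = {z^2 - 2 / ((2 * real n + 1) * (2 * real n - 1))})
     \<and> (is_jeff n J \<longrightarrow>
          {w::complex. poly (map_poly of_int J) w = 0}
            = of_real ` ((\<lambda>z. z^2 - 2 / ((2 * real n - 1) * (2 * real n + 1))) ` zetas n)
          \<and> card ((\<lambda>z. z^2 - 2 / ((2 * real n - 1) * (2 * real n + 1))) ` zetas n) = n - 1)"
proof (intro conjI ballI impI)
  define r where "r z = z\<^sup>2 - 2 / ((2 * real n - 1) * (2 * real n + 1))" for z
  have n: "n \<ge> 1" using assms by simp
  show "{x. poly (SU n z) x = 0} = {z^2 - 2 / ((2 * real n + 1) * (2 * real n - 1))}"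
    if "z \<in> zetas n" for z
    using roots_SU [OF n that] by (simp add: mult.commute)
  have "inj_on r (zetas n)"
    by (rule inj_onI) (simp add: r_def zetas_def power2_eq_iff)
  then show "card (r ` zetas n) = n - 1"
    by (simp add: card_image card_zetas [OF n])
  assume "is_jeff n J"
  then obtain c where c: "c \<noteq> 0" "map_poly of_int J = smult c (\<Prod>z\<in>zetas n. SU n z)"
    unfolding is_jeff_def by auto
  have "(\<Prod>z\<in>zetas n. SU n z) = (\<Prod>z\<in>zetas n. smult (poly (cheb_U (2*n-1)) z) [:- r z, 1:])"
    using SU_at_critical_point [OF n] unfolding r_def zetas_def by (intro prod.cong) auto
  moreover have "map_poly (of_int :: int \<Rightarrow> complex) J = map_poly of_real (map_poly of_int J)"
    by (simp add: map_poly_map_poly o_def)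
  ultimately have J_eq: "map_poly (of_int :: int \<Rightarrow> complex) J
               = map_poly of_real (smult c (\<Prod>z\<in>zetas n. smult (poly (cheb_U (2*n-1)) z) [:- r z, 1:]))"
    using c(2) by simp
  show "{w::complex. poly (map_poly of_int J) w = 0} = of_real ` r ` zetas n"
    unfolding J_eq
    by (rule complex_roots_of_product_of_linear_factors [OF finite_zetas [OF n] c(1)])
      (simp add: zetas_def poly_cheb_U_nonzero_at_critical_point)
qed

end
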